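(* Let $\varepsilon>0$ and $n\ge 2$. Consider a colouring of the edges of $\overleftrightarrow{K}_n$ in which at least $(1+\varepsilon)\binom{n}{2}$ edges are blue. Then for every oriented tree $T$ with $|T|\le\lceil\varepsilon n/2\rceil$ there is a copy of $T$ all of whose edges are blue.
   Context: $\overleftrightarrow{K}_n$ is the complete directed graph on $n$ vertices: it has an edge $xy$ for every ordered pair $(x,y)$ of distinct vertices. An oriented tree is a directed graph without loops or bidirected edges whose underlying graph is a tree; $|T|$ is its number of vertices. *)

theory Defs
  imports Complex_Main
begin

definition complete_digraph_edges :: "nat \<Rightarrow> (nat \<times> nat) set" where
  "complete_digraph_edges n = {(x, y). x < n \<and> y < n \<and> x \<noteq> y}"

definition und_adj :: "('a \<times> 'a) set \<Rightarrow> 'a \<Rightarrow> 'a \<Rightarrow> bool" where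
  "und_adj A x y \<longleftrightarrow> (x, y) \<in> A \<or> (y, x) \<in> A"

definition und_connected :: "'a set \<Rightarrow> ('a \<times> 'a) set \<Rightarrow> bool" where
  "und_connected V A \<longleftrightarrow>
     (\<forall>x\<in>V. \<forall>y\<in>V. (x, y) \<in> (A \<union> A\<inverse>)\<^sup>*)"

definition und_cycle :: "'a set \<Rightarrow> ('a \<times> 'a) set \<Rightarrow> 'a list \<Rightarrow> bool" where
  "und_cycle V A vs \<longleftrightarrow> length vs \<ge> 3 \<and> distinct vs \<and> set vs \<subseteq> V \<and>
     (\<forall>i. Suc i < length vs \<longrightarrow> und_adj A (vs ! i) (vs ! Suc i)) \<and>
     und_adj A (last vs) (hd vs)"

definition oriented_tree :: "'a set \<Rightarrow> ('a \<times> 'a) set \<Rightarrow> bool" where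
  "oriented_tree V A \<longleftrightarrow> finite V \<and> V \<noteq> {} \<and> A \<subseteq> V \<times> V \<and>
     (\<forall>x. (x, x) \<notin> A) \<and> (\<forall>x y. (x, y) \<in> A \<longrightarrow> (y, x) \<notin> A) \<and>
     und_connected V A \<and> \<not> (\<exists>vs. und_cycle V A vs)"

definition has_copy_in :: "'a set \<Rightarrow> ('a \<times> 'a) set \<Rightarrow> nat \<Rightarrow> (nat \<times> nat) set \<Rightarrow> bool" where
  "has_copy_in V A n B \<longleftrightarrow> (\<exists>f. inj_on f V \<and> f ` V \<subseteq> {..<n} \<and>
     (\<forall>(x, y) \<in> A. (f x, f y) \<in> B))"

end

theory Submission
  imports Defs
begin

text \<open>
  Let \<open>E\<close> be the set of pairs joined by blue edges in both directions. Since \<open>Blue\<close> and its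
  reverse together cover at most the \<open>n(n-1)\<close> edges, \<open>|E| \<ge> \<epsilon> n(n-1)\<close>. Repeatedly deleting
  a vertex of degree \<open>\<le> d\<close> removes at most \<open>2d\<close> pairs from \<open>E\<close>, so if \<open>|E| > 2d(n-1)\<close> some
  nonempty vertex set survives on which the symmetric graph \<open>E\<close> has minimum degree \<open>> d\<close>.
  With \<open>d = |T| - 2 < \<epsilon> n / 2\<close> this graph contains every tree on \<open>|T|\<close> vertices, whatever the
  orientation of its edges: embed the tree greedily, adding one leaf at a time.
\<close>

section \<open>Leaves of oriented trees\<close>

lemma und_adj_sym: "und_adj A x y \<Longrightarrow> und_adj A y x"
  by (auto simp: und_adj_def)

lemma und_cycle_iff_successively:
  "und_cycle V A vs \<longleftrightarrow> 3 \<le> length vs \<and> distinct vs \<and> set vs \<subseteq> V \<and>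
     successively (und_adj A) vs \<and> und_adj A (last vs) (hd vs)"
  by (simp add: und_cycle_def successively_conv_nth)

lemma und_cycle_take_path:
  assumes "distinct vs" "set vs \<subseteq> V" "successively (und_adj A) vs"
    and "2 \<le> j" "j < length vs" "und_adj A (vs ! j) (hd vs)"
  shows "und_cycle V A (take (Suc j) vs)"
proof -
  have "successively (und_adj A) (take (Suc j) vs)"
    using assms(3) successively_append_iff[of _ "take (Suc j) vs" "drop (Suc j) vs"] by simp
  moreover have "last (take (Suc j) vs) = vs ! j"
    using assms(5) by (simp add: take_Suc_conv_app_nth)
  moreover have "hd (take (Suc j) vs) = hd vs"
    using assms(5) by simp
  ultimately show ?thesis
    using assms by (auto simp: und_cycle_iff_successively dest: in_set_takeD)
qed

text \<open>The first vertex of a longest path is a leaf: a second neighbour would either extend the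
  path or close a cycle.\<close>

lemma oriented_tree_has_leaf:
  assumes T: "oriented_tree V A" and two: "2 \<le> card V"
  obtains v w where "v \<in> V" "w \<in> V" "v \<noteq> w" "und_adj A v w" "\<And>z. und_adj A v z \<Longrightarrow> z = w"
proof -
  have fin: "finite V" and conn: "und_connected V A" and acyclic: "\<And>vs. \<not> und_cycle V A vs"
    using T by (auto simp: oriented_tree_def)
  have adj_in_V: "und_adj A a b \<Longrightarrow> a \<in> V \<and> b \<in> V \<and> a \<noteq> b" for a b
    using T by (auto simp: oriented_tree_def und_adj_def)
  define path where "path vs \<longleftrightarrow>
    distinct vs \<and> set vs \<subseteq> V \<and> 2 \<le> length vs \<and> successively (und_adj A) vs" for vs
  obtain x y where "x \<in> V" "y \<in> V" "x \<noteq> y"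
    using two fin card_le_Suc0_iff_eq[of V] by fastforce
  then have "(x, y) \<in> (A \<union> A\<inverse>)\<^sup>*"
    using conn by (auto simp: und_connected_def)
  with \<open>x \<noteq> y\<close> obtain z where "und_adj A x z"
    by (auto simp: und_adj_def elim: converse_rtranclE)
  then have "path [x, z]"
    using adj_in_V by (auto simp: path_def)
  moreover have "path vs \<Longrightarrow> length vs < Suc (card V)" for vs
    using fin by (metis path_def card_mono distinct_card le_imp_less_Suc)
  ultimately obtain vs where "path vs" and longest: "\<And>us. path us \<Longrightarrow> length us \<le> length vs"
    using ex_has_greatest_nat[of path "[x, z]" length "Suc (card V)"] by blast
  then obtain a b rest where vs: "vs = a # b # rest"
    by (auto simp: path_def numeral_2_eq_2 Suc_le_length_iff)
  have ab: "und_adj A a b"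
    using \<open>path vs\<close> vs by (simp add: path_def)
  have "u = b" if au: "und_adj A a u" for u
  proof (cases "u \<in> set vs")
    case False
    then have "path (u # vs)"
      using \<open>path vs\<close> vs adj_in_V[OF au] und_adj_sym[OF au] by (auto simp: path_def)
    then show ?thesis
      using longest by fastforce
  next
    case True
    then obtain j where j: "j < length vs" "vs ! j = u"
      by (auto simp: in_set_conv_nth)
    have "j \<noteq> 0"
      using j vs adj_in_V[OF au] by (metis nth_Cons_0)
    moreover have "\<not> 2 \<le> j"
      using und_cycle_take_path[of vs V A j] \<open>path vs\<close> j vs und_adj_sym[OF au] acyclic
      by (auto simp: path_def)
    ultimately show ?thesis
      using j vs by (auto simp: less_2_cases_iff)
  qed
  then show ?thesis
    using that ab adj_in_V[OF ab] by blast
qed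

text \<open>Collapsing the leaf \<open>v\<close> onto its neighbour \<open>w\<close> maps every walk to a walk avoiding \<open>v\<close>.\<close>

lemma und_connected_remove_leaf:
  assumes conn: "und_connected V A" and AV: "A \<subseteq> V \<times> V"
    and leaf: "\<And>z. und_adj A v z \<Longrightarrow> z = w"
  shows "und_connected (V - {v}) (A \<inter> (V - {v}) \<times> (V - {v}))"
proof -
  define A' where "A' = A \<inter> (V - {v}) \<times> (V - {v})"
  define r where "r z = (if z = v then w else z)" for z
  have "(r x, r z) \<in> (A' \<union> A'\<inverse>)\<^sup>*" if "(x, z) \<in> (A \<union> A\<inverse>)\<^sup>*" for x z
    using that
  proof (induction rule: rtrancl_induct)
    case (step y z)
    have "r y = r z \<or> (r y, r z) \<in> A' \<union> A'\<inverse>"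
      using step.hyps(2) AV leaf by (auto simp: r_def A'_def und_adj_def)
    with step.IH show ?case
      by (metis rtrancl.rtrancl_into_rtrancl)
  qed simp
  then show ?thesis
    using conn unfolding und_connected_def A'_def[symmetric] by (metis DiffE r_def singletonI)
qed

lemma oriented_tree_remove_leaf:
  assumes T: "oriented_tree V A" and w: "w \<in> V" "v \<noteq> w"
    and leaf: "\<And>z. und_adj A v z \<Longrightarrow> z = w"
  shows "oriented_tree (V - {v}) (A \<inter> (V - {v}) \<times> (V - {v}))"
proof -
  have "und_cycle V A vs" if "und_cycle (V - {v}) (A \<inter> (V - {v}) \<times> (V - {v})) vs" for vs
    using that by (auto simp: und_cycle_def und_adj_def)
  then show ?thesis
    using T w und_connected_remove_leaf[of V A v w] leaf by (auto simp: oriented_tree_def)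
qed

section \<open>Embedding trees into graphs of large minimum degree\<close>

definition degree_in :: "'b set \<Rightarrow> ('b \<times> 'b) set \<Rightarrow> 'b \<Rightarrow> nat" where
  "degree_in U E x = card {y \<in> U. (x, y) \<in> E}"

definition digraph_embedding ::
    "'a set \<Rightarrow> ('a \<times> 'a) set \<Rightarrow> 'b set \<Rightarrow> ('b \<times> 'b) set \<Rightarrow> ('a \<Rightarrow> 'b) \<Rightarrow> bool" where
  "digraph_embedding V A U E f \<longleftrightarrow> inj_on f V \<and> f ` V \<subseteq> U \<and> (\<forall>(x, y) \<in> A. (f x, f y) \<in> E)"

lemma digraph_embedding_add_leaf:
  assumes f: "digraph_embedding (V - {v}) (A \<inter> (V - {v}) \<times> (V - {v})) U E f"
    and AV: "A \<subseteq> V \<times> V" and loopfree: "\<And>x. (x, x) \<notin> A"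
    and w: "w \<in> V" "v \<noteq> w" and leaf: "\<And>z. und_adj A v z \<Longrightarrow> z = w"
    and u: "u \<in> U" "u \<notin> f ` (V - {v})" "(f w, u) \<in> E" "(u, f w) \<in> E"
  shows "digraph_embedding V A U E (f(v := u))"
proof -
  have "inj_on (f(v := u)) (V - {v})"
    using f u(2) by (simp add: digraph_embedding_def inj_on_fun_updI)
  moreover have "(f(v := u)) v \<notin> (f(v := u)) ` (V - {v})"
    using u(2) by auto
  ultimately have "inj_on (f(v := u)) (insert v (V - {v}))"
    by (metis Diff_idemp inj_on_insert)
  then have "inj_on (f(v := u)) V"
    by (rule inj_on_subset) blast
  moreover have "(f(v := u)) ` V \<subseteq> U"
    using f u(1) by (auto simp: digraph_embedding_def)
  moreover have "((f(v := u)) x, (f(v := u)) y) \<in> E" if xy: "(x, y) \<in> A" for x y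
  proof -
    consider "x = v" "y = w" | "y = v" "x = w" | "x \<noteq> v" "y \<noteq> v"
      using xy leaf[of x] leaf[of y] unfolding und_adj_def by blast
    then show ?thesis
    proof cases
      case 3
      then have "(x, y) \<in> A \<inter> (V - {v}) \<times> (V - {v})"
        using xy AV by auto
      then show ?thesis
        using f 3 by (auto simp: digraph_embedding_def)
    qed (use xy u w loopfree in auto)
  qed
  ultimately show ?thesis
    unfolding digraph_embedding_def by blast
qed

text \<open>The neighbour \<open>w\<close> of a new leaf has at least \<open>m\<close> neighbours, at most \<open>|V| - 2 < m\<close> of
  which are already used, so one of them is free.\<close>

lemma oriented_tree_embedding_min_degree:
  assumes "oriented_tree V A" "card V \<le> Suc m"
    and U: "finite U" "U \<noteq> {}" and E: "sym E" "irrefl E"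
    and deg: "\<And>x. x \<in> U \<Longrightarrow> m \<le> degree_in U E x"
  shows "\<exists>f. digraph_embedding V A U E f"
  using assms(1,2)
proof (induction "card V" arbitrary: V A rule: less_induct)
  case less
  then have fin: "finite V" and "V \<noteq> {}" and AV: "A \<subseteq> V \<times> V" and loopfree: "\<And>x. (x, x) \<notin> A"
    by (auto simp: oriented_tree_def)
  show ?case
  proof (cases "2 \<le> card V")
    case False
    with fin \<open>V \<noteq> {}\<close> have "card V = 1"
      by (cases "card V") (auto simp: card_gt_0_iff)
    then obtain a where "V = {a}"
      by (rule card_1_singletonE)
    moreover obtain u where "u \<in> U"
      using U by blast
    ultimately show ?thesis
      using AV loopfree by (intro exI[of _ "\<lambda>_. u"]) (auto simp: digraph_embedding_def)
  next
    case True
    with less.prems(1) obtain v w where vw: "v \<in> V" "w \<in> V" "v \<noteq> w"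
      and leaf: "\<And>z. und_adj A v z \<Longrightarrow> z = w"
      by (metis oriented_tree_has_leaf)
    define V' where "V' = V - {v}"
    have card_V: "card V = Suc (card V')"
      using card_Suc_Diff1[OF fin vw(1)] by (simp add: V'_def)
    have "oriented_tree V' (A \<inter> V' \<times> V')"
      unfolding V'_def using less.prems(1) vw(2,3) leaf by (rule oriented_tree_remove_leaf)
    moreover have "card V' < card V" "card V' \<le> m"
      using card_V less.prems(2) by auto
    ultimately obtain f where f: "digraph_embedding V' (A \<inter> V' \<times> V') U E f"
      using less.hyps by (meson le_SucI)
    define N where "N = {y \<in> U. (f w, y) \<in> E}"
    have "w \<in> V'"
      using vw by (simp add: V'_def)
    then have "f w \<in> U"
      using f by (auto simp: digraph_embedding_def)
    then have "m \<le> card N"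
      using deg by (simp add: N_def degree_in_def)
    have "\<not> N \<subseteq> f ` V'"
    proof
      assume "N \<subseteq> f ` V'"
      then have "N \<subseteq> f ` V' - {f w}"
        using E by (auto simp: N_def irreflD)
      then have "card N \<le> card (f ` V' - {f w})"
        using fin by (intro card_mono) (auto simp: V'_def)
      also have "\<dots> = card (f ` V') - 1"
        using \<open>w \<in> V'\<close> by (simp add: card_Diff_singleton)
      also have "\<dots> < card V'"
        using \<open>w \<in> V'\<close> fin card_image_le[of V' f] card_gt_0_iff[of V'] by (auto simp: V'_def)
      finally show False
        using \<open>m \<le> card N\<close> \<open>card V' \<le> m\<close> by linarith
    qed
    then obtain u where u: "u \<in> U" "u \<notin> f ` V'" "(f w, u) \<in> E"
      by (auto simp: N_def)
    have "(u, f w) \<in> E"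
      using E(1) u(3) by (rule symD)
    with f[unfolded V'_def] AV loopfree vw(2,3) leaf u[unfolded V'_def]
    have "digraph_embedding V A U E (f(v := u))"
      by (rule digraph_embedding_add_leaf)
    then show ?thesis
      by blast
  qed
qed

section \<open>Subgraphs of large minimum degree\<close>

lemma card_edges_remove_vertex:
  assumes "finite W" "sym E"
  shows "card (E \<inter> W \<times> W) \<le> card (E \<inter> (W - {x}) \<times> (W - {x})) + 2 * degree_in W E x"
proof -
  define S where "S = {y \<in> W. (x, y) \<in> E}"
  have "finite S"
    using assms(1) by (simp add: S_def)
  have "E \<inter> W \<times> W \<subseteq> (E \<inter> (W - {x}) \<times> (W - {x})) \<union> Pair x ` S \<union> (\<lambda>y. (y, x)) ` S"
    using assms(2) by (auto simp: S_def dest: symD)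
  then have "card (E \<inter> W \<times> W) \<le>
      card ((E \<inter> (W - {x}) \<times> (W - {x})) \<union> Pair x ` S \<union> (\<lambda>y. (y, x)) ` S)"
    using assms(1) \<open>finite S\<close> by (intro card_mono) auto
  also have "\<dots> \<le> card (E \<inter> (W - {x}) \<times> (W - {x})) + card (Pair x ` S) + card ((\<lambda>y. (y, x)) ` S)"
    by (meson add_le_mono card_Un_le order_trans le_refl)
  also have "\<dots> \<le> card (E \<inter> (W - {x}) \<times> (W - {x})) + 2 * card S"
    using card_image_le[OF \<open>finite S\<close>, of "Pair x"] card_image_le[OF \<open>finite S\<close>, of "\<lambda>y. (y, x)"]
    by linarith
  finally show ?thesis
    by (simp add: S_def degree_in_def)
qed

lemma min_degree_subgraph_or_sparse:
  assumes "finite W" "sym E" "irrefl E"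
  shows "(\<exists>U. U \<noteq> {} \<and> U \<subseteq> W \<and> (\<forall>x\<in>U. d < degree_in U E x))
    \<or> card (E \<inter> W \<times> W) \<le> 2 * d * (card W - 1)"
  using assms(1)
proof (induction "card W" arbitrary: W rule: less_induct)
  case less
  show ?case
  proof (cases "W \<noteq> {} \<and> (\<forall>x\<in>W. d < degree_in W E x)")
    case True
    then show ?thesis by blast
  next
    case False
    show ?thesis
    proof (cases "card W \<le> 1")
      case True
      then have "\<forall>a\<in>W. \<forall>b\<in>W. a = b"
        using card_le_Suc0_iff_eq[OF less.prems] by simp
      then have "E \<inter> W \<times> W = {}"
        using irreflD[OF assms(3)] by fastforce
      then show ?thesis by simp
    next
      case many: False
      then have "W \<noteq> {}"
        by auto
      with False obtain x where x: "x \<in> W" "degree_in W E x \<le> d"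
        by (auto simp: not_less)
      have card_W: "card W = Suc (card (W - {x}))"
        using card_Suc_Diff1[OF less.prems x(1)] by simp
      then have "card (W - {x}) \<noteq> 0"
        using many by linarith
      then obtain k where k: "card (W - {x}) = Suc k"
        using not0_implies_Suc by blast
      have "card (W - {x}) < card W" "finite (W - {x})"
        using card_W less.prems by simp_all
      from less.hyps[OF this]
      show ?thesis
      proof
        assume "\<exists>U. U \<noteq> {} \<and> U \<subseteq> W - {x} \<and> (\<forall>x\<in>U. d < degree_in U E x)"
        then show ?thesis by blast
      next
        assume "card (E \<inter> (W - {x}) \<times> (W - {x})) \<le> 2 * d * (card (W - {x}) - 1)"
        moreover have "2 * d * (card W - 1) = 2 * d * (card (W - {x}) - 1) + 2 * d"
          unfolding card_W k by simp
        ultimately show ?thesis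
          using card_edges_remove_vertex[OF less.prems assms(2), of x] x(2) by linarith
      qed
    qed
  qed
qed

section \<open>Counting blue double edges\<close>

lemma card_le_card_symmetric_part:
  assumes "finite C" "B \<subseteq> C" "B\<inverse> \<subseteq> C"
  shows "2 * card B \<le> card (B \<inter> B\<inverse>) + card C"
proof -
  have "finite B"
    using assms finite_subset by blast
  have "card (B \<union> B\<inverse>) + card (B \<inter> B\<inverse>) = 2 * card B"
    using card_Un_Int[of B "B\<inverse>"] \<open>finite B\<close> by simp
  moreover have "card (B \<union> B\<inverse>) \<le> card C"
    using assms by (intro card_mono) auto
  ultimately show ?thesis
    by linarith
qed

lemma card_complete_digraph_edges: "card (complete_digraph_edges n) = n * (n - 1)"
proof -
  have "complete_digraph_edges n = {..<n} \<times> {..<n} - (\<lambda>x. (x, x)) ` {..<n}"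
    by (auto simp: complete_digraph_edges_def)
  moreover have "card ((\<lambda>x. (x, x)) ` {..<n}) = n"
    by (subst card_image) (auto simp: inj_on_def)
  ultimately show ?thesis
    by (simp add: card_Diff_subset card_cartesian_product diff_mult_distrib2 image_subset_iff)
qed

lemma card_blue_double_edges:
  fixes \<epsilon> :: real
  assumes "Blue \<subseteq> complete_digraph_edges n"
    and "(1 + \<epsilon>) * real (n choose 2) \<le> real (card Blue)"
  shows "\<epsilon> * (real n * (real n - 1)) \<le> real (card (Blue \<inter> Blue\<inverse>))"
proof -
  have "finite (complete_digraph_edges n)"
    by (rule finite_subset[of _ "{..<n} \<times> {..<n}"]) (auto simp: complete_digraph_edges_def)
  moreover have "Blue\<inverse> \<subseteq> complete_digraph_edges n"
    using assms(1) by (auto simp: complete_digraph_edges_def)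
  ultimately have "2 * card Blue \<le> card (Blue \<inter> Blue\<inverse>) + n * (n - 1)"
    using card_le_card_symmetric_part[of "complete_digraph_edges n" Blue] assms(1)
    by (simp add: card_complete_digraph_edges)
  then have "real (2 * card Blue) \<le> real (card (Blue \<inter> Blue\<inverse>) + n * (n - 1))"
    by (simp only: of_nat_le_iff)
  moreover have "real (n * (n - 1)) = real n * (real n - 1)"
    by (cases n) (simp_all add: algebra_simps)
  moreover have "real n * (real n - 1) = 2 * real (n choose 2)"
    by (simp add: binomial_gbinomial gbinomial_pochhammer' numeral_2_eq_2 pochhammer_Suc)
  moreover have "(1 + \<epsilon>) * real (n choose 2) = real (n choose 2) + \<epsilon> * real (n choose 2)"
    by (simp add: algebra_simps)
  ultimately show ?thesis
    using assms(2) by simp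
qed

theorem mainTheorem9:
  fixes \<epsilon> :: real and n :: nat and Blue :: "(nat \<times> nat) set"
    and V :: "'a set" and A :: "('a \<times> 'a) set"
  assumes "\<epsilon> > 0" and "n \<ge> 2"
    and "Blue \<subseteq> complete_digraph_edges n"
    and "real (card Blue) \<ge> (1 + \<epsilon>) * real (n choose 2)"
    and "oriented_tree V A"
    and "int (card V) \<le> \<lceil>\<epsilon> * real n / 2\<rceil>"
  shows "has_copy_in V A n Blue"
proof -
  define E where "E = Blue \<inter> Blue\<inverse>"
  define d where "d = card V - 2"
  have E_sub: "E \<subseteq> {..<n} \<times> {..<n}" "sym E" "irrefl E"
    using assms(3) by (auto simp: E_def complete_digraph_edges_def intro: symI irreflI)
  have "real (card V) - 1 < \<epsilon> * real n / 2"
    using assms(6) le_ceiling_iff[of "int (card V)" "\<epsilon> * real n / 2"] by simp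
  then have "2 * real d < \<epsilon> * real n"
    using assms(1,2) by (cases "2 \<le> card V") (auto simp: d_def of_nat_diff)
  have "real (2 * d * (n - 1)) = 2 * real d * (real n - 1)"
    using assms(2) by (simp add: of_nat_diff)
  also have "\<dots> < \<epsilon> * (real n * (real n - 1))"
    using \<open>2 * real d < \<epsilon> * real n\<close> assms(2) by (simp add: mult.assoc[symmetric] mult_strict_right_mono)
  also have "\<dots> \<le> real (card E)"
    unfolding E_def using assms(3,4) by (rule card_blue_double_edges)
  finally have "2 * d * (n - 1) < card E"
    by (simp only: of_nat_less_iff)
  then have "\<not> card (E \<inter> {..<n} \<times> {..<n}) \<le> 2 * d * (card {..<n} - 1)"
    using E_sub(1) by (simp add: Int_absorb2)
  then obtain U where U: "U \<noteq> {}" "U \<subseteq> {..<n}" "\<And>x. x \<in> U \<Longrightarrow> Suc d \<le> degree_in U E x"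
    using min_degree_subgraph_or_sparse[of "{..<n}" E d] E_sub by (auto simp: Suc_le_eq)
  moreover have "card V \<le> Suc (Suc d)"
    by (simp add: d_def)
  moreover have "finite U"
    using U(2) finite_subset by blast
  ultimately obtain f where "digraph_embedding V A U E f"
    using oriented_tree_embedding_min_degree[OF assms(5) _ _ _ E_sub(2,3)] by blast
  moreover have "E \<subseteq> Blue"
    by (simp add: E_def)
  ultimately show ?thesis
    using U(2) unfolding has_copy_in_def digraph_embedding_def by (intro exI[of _ f]) auto
qed

end
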